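(* Consider the LSTM network \[ \begin{aligned} x^+ &= \sigma_g(W_f u + U_f \xi + b_f)\circ x + \sigma_g(W_i u + U_i \xi + b_i)\circ \sigma_c(W_c u + U_c \xi + b_c),\\ \xi^+ &= \sigma_g(W_o u + U_o \xi + b_o)\circ \sigma_c(x^+),\qquad y = C\xi + b_y, \end{aligned} \] with state $\chi=(x,\xi)$ and inputs in $\mathcal{U}=[-u_{\max},u_{\max}]^{n_u}$. Let \[ \alpha=\tfrac14\|U_f\|\frac{\bar{\sigma}_g^i\bar{\sigma}_c^c}{1-\bar{\sigma}_g^f}+\bar{\sigma}_g^i\|U_c\|+\tfrac14\|U_i\|\bar{\sigma}_c^c,\qquad A_\delta=\begin{bmatrix}\bar{\sigma}_g^f & \alpha\\ \bar{\sigma}_g^o\bar{\sigma}_g^f & \alpha\bar{\sigma}_g^o+\tfrac14\bar{\sigma}_c^x\|U_o\|\end{bmatrix}. \] If $\rho(A_\delta)<1$, then the network is incrementally input-to-state stable ($\delta$ISS): there exist $\beta_\delta\in\mathcal{KL}$ and $\gamma_\delta\in\mathcal{K}_\infty$ such that for every $k\in\mathbb{Z}_{\ge0}$, all initial states $\chi_{01},\chi_{02}\in\mathcal{X}$ and all input sequences $u_1(\cdot),u_2(\cdot)$ with values in $\mathcal{U}$, the corresponding solutions satisfy \[ \|\chi_1(k)-\chi_2(k)\|\le\beta_\delta(\|\chi_{01}-\chi_{02}\|,k)+\gamma_\delta\big(\max_{h\ge0}\|u_1(h)-u_2(h)\|\big). \]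
   Context: $\sigma_g(t)=1/(1+e^{-t})$, $\sigma_c=\tanh$, applied entrywise; $\circ$ is the Hadamard product. $\|\cdot\|$ is the Euclidean/induced 2-norm, $\|\cdot\|_\infty$ the induced $\infty$-norm, $\rho$ the spectral radius. For $\star\in\{f,i,o\}$, $\bar{\sigma}_g^\star=\sigma_g(\|[W_\star u_{\max}\ U_\star\ b_\star]\|_\infty)$ (horizontal concatenation); $\bar{\sigma}_c^c=\sigma_c(\|[W_c u_{\max}\ U_c\ b_c]\|_\infty)$; $\bar{\sigma}_c^x=\sigma_c\big(\bar{\sigma}_g^i\bar{\sigma}_c^c/(1-\bar{\sigma}_g^f)\big)$. The state set is $\mathcal{X}=\{(x,\xi):|x_{(j)}|\le\bar{\sigma}_g^i\bar{\sigma}_c^c/(1-\bar{\sigma}_g^f),\ \xi_{(j)}\in(-1,1),\ j=1,\dots,n_x\}$. $\mathcal{K},\mathcal{K}_\infty,\mathcal{KL}$ are the standard comparison-function classes. *)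

theory Defs
  imports "HOL-Analysis.Analysis"
begin

definition sigma_g :: "real \<Rightarrow> real" where
  "sigma_g t = 1 / (1 + exp (- t))"

definition sigma_c :: "real \<Rightarrow> real" where
  "sigma_c t = tanh t"

definition vmap :: "(real \<Rightarrow> real) \<Rightarrow> real^'n \<Rightarrow> real^'n" where
  "vmap f v = (\<chi> i. f (v $ i))"

definition hadamard :: "real^'n \<Rightarrow> real^'n \<Rightarrow> real^'n" (infixl "\<circ>\<^sub>H" 70) where
  "a \<circ>\<^sub>H b = (\<chi> i. a $ i * b $ i)"

record ('x, 'u) lstm =
  Wf :: "real^'u^'x"  Uf :: "real^'x^'x"  bf :: "real^'x"
  Wi :: "real^'u^'x"  Ui :: "real^'x^'x"  bi :: "real^'x"
  Wo :: "real^'u^'x"  Uo :: "real^'x^'x"  bo :: "real^'x"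
  Wc :: "real^'u^'x"  Uc :: "real^'x^'x"  bc :: "real^'x"

definition lstm_step ::
  "('x::finite, 'u::finite) lstm \<Rightarrow> real^'u \<Rightarrow> ((real^'x) \<times> (real^'x)) \<Rightarrow> ((real^'x) \<times> (real^'x))" where
  "lstm_step N u s =
     (let x = fst s; \<xi> = snd s;
          xp = vmap sigma_g (Wf N *v u + Uf N *v \<xi> + bf N) \<circ>\<^sub>H x
             + vmap sigma_g (Wi N *v u + Ui N *v \<xi> + bi N) \<circ>\<^sub>H vmap sigma_c (Wc N *v u + Uc N *v \<xi> + bc N);
          \<xi>p = vmap sigma_g (Wo N *v u + Uo N *v \<xi> + bo N) \<circ>\<^sub>H vmap sigma_c xp
      in (xp, \<xi>p))"

primrec lstm_traj ::
  "('x::finite, 'u::finite) lstm \<Rightarrow> (nat \<Rightarrow> real^'u) \<Rightarrow> ((real^'x) \<times> (real^'x)) \<Rightarrow> nat \<Rightarrow> ((real^'x) \<times> (real^'x))" where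
  "lstm_traj N u s0 0 = s0"
| "lstm_traj N u s0 (Suc k) = lstm_step N (u k) (lstm_traj N u s0 k)"

definition mnorm2 :: "real^'m^'n \<Rightarrow> real" where
  "mnorm2 A = onorm (\<lambda>v. A *v v)"

text \<open>Induced infinity-norm (max absolute row sum) of the horizontal
  concatenation [W u_max, U, b].\<close>
definition cat_inf_norm :: "real \<Rightarrow> real^'u^'x \<Rightarrow> real^'x^'x \<Rightarrow> real^'x \<Rightarrow> real" where
  "cat_inf_norm umax W U b =
     Max (range (\<lambda>j::'x. (\<Sum>k\<in>UNIV. \<bar>umax * W $ j $ k\<bar>) + (\<Sum>l\<in>UNIV. \<bar>U $ j $ l\<bar>) + \<bar>b $ j\<bar>))"

definition sgbar_f :: "('x::finite, 'u::finite) lstm \<Rightarrow> real \<Rightarrow> real" where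
  "sgbar_f N umax = sigma_g (cat_inf_norm umax (Wf N) (Uf N) (bf N))"
definition sgbar_i :: "('x::finite, 'u::finite) lstm \<Rightarrow> real \<Rightarrow> real" where
  "sgbar_i N umax = sigma_g (cat_inf_norm umax (Wi N) (Ui N) (bi N))"
definition sgbar_o :: "('x::finite, 'u::finite) lstm \<Rightarrow> real \<Rightarrow> real" where
  "sgbar_o N umax = sigma_g (cat_inf_norm umax (Wo N) (Uo N) (bo N))"
definition scbar_c :: "('x::finite, 'u::finite) lstm \<Rightarrow> real \<Rightarrow> real" where
  "scbar_c N umax = sigma_c (cat_inf_norm umax (Wc N) (Uc N) (bc N))"
definition scbar_x :: "('x::finite, 'u::finite) lstm \<Rightarrow> real \<Rightarrow> real" where
  "scbar_x N umax = sigma_c (sgbar_i N umax * scbar_c N umax / (1 - sgbar_f N umax))"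

definition state_set :: "('x::finite, 'u::finite) lstm \<Rightarrow> real \<Rightarrow> ((real^'x) \<times> (real^'x)) set" where
  "state_set N umax = {(x, \<xi>). \<forall>j.
      \<bar>x $ j\<bar> \<le> sgbar_i N umax * scbar_c N umax / (1 - sgbar_f N umax)
      \<and> \<xi> $ j \<in> {-1<..<1}}"

definition input_set :: "real \<Rightarrow> (real^'u) set" where
  "input_set umax = {u. \<forall>j. u $ j \<in> {-umax..umax}}"

definition spectral_radius :: "real^'n^'n \<Rightarrow> real" where
  "spectral_radius A = Max {cmod z | z. \<exists>v::complex^'n. v \<noteq> 0 \<and>
       (\<chi> i j. complex_of_real (A $ i $ j)) *v v = (\<chi> i. z * v $ i)}"

definition A_delta :: "('x::finite, 'u::finite) lstm \<Rightarrow> real \<Rightarrow> real^2^2" where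
  "A_delta N umax =
     (let sf = sgbar_f N umax; si = sgbar_i N umax; so = sgbar_o N umax;
          sc = scbar_c N umax; sx = scbar_x N umax;
          \<alpha> = 1/4 * mnorm2 (Uf N) * (si * sc / (1 - sf)) + si * mnorm2 (Uc N)
              + 1/4 * mnorm2 (Ui N) * sc
      in (\<chi> i j. if i = 1 then (if j = 1 then sf else \<alpha>)
                  else (if j = 1 then so * sf else \<alpha> * so + 1/4 * sx * mnorm2 (Uo N))))"

definition class_K :: "(real \<Rightarrow> real) \<Rightarrow> bool" where
  "class_K f \<longleftrightarrow> continuous_on {0..} f \<and> strict_mono_on {0..} f \<and> f 0 = 0"

definition class_Kinf :: "(real \<Rightarrow> real) \<Rightarrow> bool" where
  "class_Kinf f \<longleftrightarrow> class_K f \<and> filterlim f at_top at_top"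

definition class_KL :: "(real \<Rightarrow> nat \<Rightarrow> real) \<Rightarrow> bool" where
  "class_KL \<beta> \<longleftrightarrow> (\<forall>t. class_K (\<lambda>s. \<beta> s t)) \<and>
     (\<forall>s\<ge>0. antimono (\<lambda>t. \<beta> s t) \<and> (\<lambda>t. \<beta> s t) \<longlonglongrightarrow> 0)"

end

theory Submission
  imports Defs "HOL-Computational_Algebra.Polynomial"
begin

text \<open>
  Every trajectory starting in the state set stays there, and on this set each gate is bounded
  entrywise by its constant \<open>\<sigma>\<close>-bar, while \<open>\<sigma>\<^sub>g\<close> and \<open>tanh\<close> are Lipschitz with constants 1/4 and 1.
  Hence the distances \<open>e\<^sub>x\<close>, \<open>e\<^sub>\<xi>\<close> of two trajectories obey the componentwise recursion
  \<open>e(k+1) \<le> A\<^sub>\<delta> e(k) + b \<parallel>u\<^sub>1(k) - u\<^sub>2(k)\<parallel>\<close>.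
  For a nonnegative 2x2 matrix, \<open>\<rho>(A\<^sub>\<delta>) < 1\<close> yields positive weights \<open>p\<close> and \<open>\<lambda> < 1\<close> with
  \<open>p\<^sup>T A\<^sub>\<delta> \<le> \<lambda> p\<^sup>T\<close>, so the weighted distance \<open>p\<^sup>T e\<close> contracts geometrically up to an input
  term. This gives \<open>\<beta>(s, k) = C \<lambda>\<^sup>k s\<close> and a linear \<open>\<gamma>\<close>.
\<close>

lemma tanh_diff_le:
  fixes x y :: real
  assumes "x \<le> y"
  shows "tanh y - tanh x \<le> y - x"
proof -
  have "((\<lambda>t. t - tanh t) has_real_derivative 1 - (1 - tanh t ^ 2)) (at t)" for t :: real
    by (auto intro!: derivative_eq_intros)
  moreover have "0 \<le> 1 - (1 - tanh t ^ 2)" for t :: real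
    by simp
  ultimately have "x - tanh x \<le> y - tanh y"
    by (intro DERIV_nonneg_imp_nondecreasing[OF assms]) blast
  then show ?thesis
    by simp
qed

lemma abs_tanh_diff_le: "\<bar>tanh x - tanh y\<bar> \<le> \<bar>x - y\<bar>" for x y :: real
  using tanh_diff_le[of x y] tanh_diff_le[of y x] by (cases "x \<le> y") (auto simp: abs_if)

lemma sigma_g_eq_tanh: "sigma_g t = (1 + tanh (t / 2)) / 2"
proof -
  have "1 + exp (- t) > 0"
    by (simp add: add_pos_pos)
  then show ?thesis
    unfolding sigma_g_def tanh_real_altdef by (simp add: field_simps)
qed

lemma sigma_g_pos: "0 < sigma_g t"
  unfolding sigma_g_eq_tanh using tanh_real_bounds[of "t / 2"] by auto

lemma sigma_g_less_1: "sigma_g t < 1"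
  unfolding sigma_g_eq_tanh using tanh_real_bounds[of "t / 2"] by auto

lemma sigma_g_mono: "s \<le> t \<Longrightarrow> sigma_g s \<le> sigma_g t"
  unfolding sigma_g_eq_tanh by simp

lemma abs_sigma_g_le: "\<bar>t\<bar> \<le> c \<Longrightarrow> \<bar>sigma_g t\<bar> \<le> sigma_g c"
  using sigma_g_pos[of t] sigma_g_mono[of t c] by simp

lemma abs_sigma_g_diff_le: "\<bar>sigma_g s - sigma_g t\<bar> \<le> 1/4 * \<bar>s - t\<bar>"
  using abs_tanh_diff_le[of "s / 2" "t / 2"] unfolding sigma_g_eq_tanh
  by (simp add: field_simps abs_if split: if_splits)

lemma abs_sigma_c_less_1: "\<bar>sigma_c t\<bar> < 1"
  unfolding sigma_c_def using tanh_real_bounds[of t] by (simp add: abs_less_iff)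

lemma abs_sigma_c_le: "\<bar>t\<bar> \<le> c \<Longrightarrow> \<bar>sigma_c t\<bar> \<le> sigma_c c"
  unfolding sigma_c_def by (metis tanh_real_abs tanh_real_le_iff)

lemma abs_sigma_c_diff_le: "\<bar>sigma_c s - sigma_c t\<bar> \<le> \<bar>s - t\<bar>"
  unfolding sigma_c_def by (rule abs_tanh_diff_le)

lemma vmap_nth [simp]: "vmap f v $ i = f (v $ i)"
  unfolding vmap_def by simp

lemma hadamard_nth [simp]: "(a \<circ>\<^sub>H b) $ i = a $ i * b $ i"
  unfolding hadamard_def by simp

lemma norm_hadamard_le:
  fixes a b :: "real^'n"
  assumes "\<And>j. \<bar>a $ j\<bar> \<le> c"
  shows "norm (a \<circ>\<^sub>H b) \<le> c * norm b"
proof -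
  have "c \<ge> 0"
    using assms[of undefined] by simp
  moreover have "norm (a \<circ>\<^sub>H b) \<le> norm (c *\<^sub>R b)"
    by (rule norm_le_componentwise_cart)
       (use assms \<open>c \<ge> 0\<close> in \<open>auto simp: abs_mult intro: mult_right_mono\<close>)
  ultimately show ?thesis
    by simp
qed

lemma norm_hadamard_diff_le:
  fixes a1 a2 b1 b2 :: "real^'n"
  assumes "\<And>j. \<bar>a1 $ j\<bar> \<le> A" and "\<And>j. \<bar>b2 $ j\<bar> \<le> B"
  shows "norm (a1 \<circ>\<^sub>H b1 - a2 \<circ>\<^sub>H b2) \<le> A * norm (b1 - b2) + B * norm (a1 - a2)"
proof -
  have "a1 \<circ>\<^sub>H b1 - a2 \<circ>\<^sub>H b2 = a1 \<circ>\<^sub>H (b1 - b2) + b2 \<circ>\<^sub>H (a1 - a2)"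
    by (simp add: vec_eq_iff algebra_simps)
  then have "norm (a1 \<circ>\<^sub>H b1 - a2 \<circ>\<^sub>H b2) \<le> norm (a1 \<circ>\<^sub>H (b1 - b2)) + norm (b2 \<circ>\<^sub>H (a1 - a2))"
    by (simp add: norm_triangle_ineq)
  also have "\<dots> \<le> A * norm (b1 - b2) + B * norm (a1 - a2)"
    by (intro add_mono norm_hadamard_le assms)
  finally show ?thesis .
qed

lemma norm_vmap_diff_le:
  fixes v w :: "real^'n"
  assumes "\<And>s t. \<bar>f s - f t\<bar> \<le> L * \<bar>s - t\<bar>" and "L \<ge> 0"
  shows "norm (vmap f v - vmap f w) \<le> L * norm (v - w)"
proof -
  have "norm (vmap f v - vmap f w) \<le> norm (L *\<^sub>R (v - w))"
    by (rule norm_le_componentwise_cart) (use assms in \<open>auto simp: abs_mult\<close>)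
  then show ?thesis
    using assms(2) by simp
qed

lemma norm_mult_vec_le_mnorm2: "norm (A *v v) \<le> mnorm2 A * norm v"
  unfolding mnorm2_def by (rule onorm[OF matrix_vector_mul_bounded_linear])

lemma mnorm2_nonneg: "0 \<le> mnorm2 A"
  unfolding mnorm2_def by (rule onorm_pos_le[OF matrix_vector_mul_bounded_linear])

lemma cat_inf_norm_ge_row:
  "(\<Sum>k\<in>UNIV. \<bar>umax * W $ j $ k\<bar>) + (\<Sum>l\<in>UNIV. \<bar>U $ j $ l\<bar>) + \<bar>b $ j\<bar> \<le> cat_inf_norm umax W U b"
  unfolding cat_inf_norm_def by (rule Max_ge) auto

lemma cat_inf_norm_nonneg: "0 \<le> cat_inf_norm umax W U b"
  by (rule order_trans[OF _ cat_inf_norm_ge_row]) (auto intro!: add_nonneg_nonneg sum_nonneg)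

lemma abs_matrix_vector_nth_le:
  fixes A :: "real^'m^'n"
  assumes "\<And>k. \<bar>v $ k\<bar> \<le> c"
  shows "\<bar>(A *v v) $ j\<bar> \<le> (\<Sum>k\<in>UNIV. \<bar>c * A $ j $ k\<bar>)"
proof -
  have "\<bar>(A *v v) $ j\<bar> = \<bar>\<Sum>k\<in>UNIV. A $ j $ k * v $ k\<bar>"
    by (simp add: matrix_vector_mult_def)
  also have "\<dots> \<le> (\<Sum>k\<in>UNIV. \<bar>A $ j $ k * v $ k\<bar>)"
    by (rule sum_abs)
  also have "\<dots> \<le> (\<Sum>k\<in>UNIV. \<bar>c * A $ j $ k\<bar>)"
  proof (rule sum_mono)
    fix k
    have "\<bar>v $ k\<bar> \<le> \<bar>c\<bar>"
      using assms[of k] by linarith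
    then show "\<bar>A $ j $ k * v $ k\<bar> \<le> \<bar>c * A $ j $ k\<bar>"
      by (simp add: abs_mult mult.commute mult_right_mono)
  qed
  finally show ?thesis .
qed

lemma abs_nth_le_of_mem_input_set:
  assumes "u \<in> input_set umax"
  shows "\<bar>u $ k\<bar> \<le> umax"
proof -
  have "u $ k \<in> {-umax..umax}"
    using assms unfolding input_set_def by blast
  then show ?thesis
    by auto
qed

lemma abs_affine_nth_le_cat_inf_norm:
  assumes "u \<in> input_set umax" and "\<And>l. \<bar>\<xi> $ l\<bar> \<le> 1"
  shows "\<bar>(W *v u + U *v \<xi> + b) $ j\<bar> \<le> cat_inf_norm umax W U b"
proof -
  have "\<bar>(W *v u) $ j\<bar> \<le> (\<Sum>k\<in>UNIV. \<bar>umax * W $ j $ k\<bar>)"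
    using assms(1) by (intro abs_matrix_vector_nth_le abs_nth_le_of_mem_input_set)
  moreover have "\<bar>(U *v \<xi>) $ j\<bar> \<le> (\<Sum>l\<in>UNIV. \<bar>U $ j $ l\<bar>)"
    using abs_matrix_vector_nth_le[of \<xi> 1 U j] assms(2) by simp
  moreover have "\<bar>(W *v u + U *v \<xi> + b) $ j\<bar> \<le> \<bar>(W *v u) $ j\<bar> + \<bar>(U *v \<xi>) $ j\<bar> + \<bar>b $ j\<bar>"
    by (simp add: abs_triangle_ineq order_trans[OF abs_triangle_ineq add_right_mono])
  ultimately show ?thesis
    using cat_inf_norm_ge_row[of umax W j U b] by linarith
qed

lemma norm_gate_diff_le:
  fixes W :: "real^'u::finite^'x::finite" and U :: "real^'x^'x"
  assumes "\<And>s t. \<bar>f s - f t\<bar> \<le> L * \<bar>s - t\<bar>" and "L \<ge> 0"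
  shows "norm (vmap f (W *v u1 + U *v \<xi>1 + b) - vmap f (W *v u2 + U *v \<xi>2 + b))
           \<le> L * (mnorm2 U * norm (\<xi>1 - \<xi>2) + mnorm2 W * norm (u1 - u2))"
proof -
  have "(W *v u1 + U *v \<xi>1 + b) - (W *v u2 + U *v \<xi>2 + b) = U *v (\<xi>1 - \<xi>2) + W *v (u1 - u2)"
    by (simp add: algebra_simps)
  then have "norm ((W *v u1 + U *v \<xi>1 + b) - (W *v u2 + U *v \<xi>2 + b))
               \<le> mnorm2 U * norm (\<xi>1 - \<xi>2) + mnorm2 W * norm (u1 - u2)"
    by (metis add_mono norm_mult_vec_le_mnorm2 norm_triangle_le)
  then show ?thesis
    using norm_vmap_diff_le[OF assms] assms(2) by (meson mult_left_mono order_trans)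
qed

section \<open>Invariance of the state set\<close>

definition xbar :: "('x::finite, 'u::finite) lstm \<Rightarrow> real \<Rightarrow> real" where
  "xbar N umax = sgbar_i N umax * scbar_c N umax / (1 - sgbar_f N umax)"

lemma sgbar_bounds:
  "0 < sgbar_f N umax" "sgbar_f N umax < 1"
  "0 < sgbar_i N umax" "sgbar_i N umax < 1"
  "0 < sgbar_o N umax" "sgbar_o N umax < 1"
  unfolding sgbar_f_def sgbar_i_def sgbar_o_def by (simp_all add: sigma_g_pos sigma_g_less_1)

lemma scbar_c_nonneg: "0 \<le> scbar_c N umax"
  unfolding scbar_c_def sigma_c_def using cat_inf_norm_nonneg by simp

lemma xbar_nonneg: "0 \<le> xbar N umax"
  unfolding xbar_def using sgbar_bounds[of N umax] scbar_c_nonneg[of N umax] by simp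

lemma scbar_x_eq_sigma_c_xbar: "scbar_x N umax = sigma_c (xbar N umax)"
  unfolding scbar_x_def xbar_def ..

lemma scbar_x_nonneg: "0 \<le> scbar_x N umax"
  unfolding scbar_x_eq_sigma_c_xbar sigma_c_def using xbar_nonneg by simp

lemma xbar_fixpoint: "sgbar_f N umax * xbar N umax + sgbar_i N umax * scbar_c N umax = xbar N umax"
  unfolding xbar_def using sgbar_bounds[of N umax] by (simp add: field_simps)

lemma mem_state_set_iff:
  "(x, \<xi>) \<in> state_set N umax \<longleftrightarrow> (\<forall>j. \<bar>x $ j\<bar> \<le> xbar N umax \<and> \<bar>\<xi> $ j\<bar> < 1)"
  unfolding state_set_def xbar_def by (auto simp: abs_less_iff)

lemma lstm_step_fst:
  "fst (lstm_step N u (x, \<xi>)) =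
     vmap sigma_g (Wf N *v u + Uf N *v \<xi> + bf N) \<circ>\<^sub>H x
   + vmap sigma_g (Wi N *v u + Ui N *v \<xi> + bi N) \<circ>\<^sub>H vmap sigma_c (Wc N *v u + Uc N *v \<xi> + bc N)"
  unfolding lstm_step_def Let_def by simp

lemma lstm_step_snd:
  "snd (lstm_step N u (x, \<xi>)) =
     vmap sigma_g (Wo N *v u + Uo N *v \<xi> + bo N) \<circ>\<^sub>H vmap sigma_c (fst (lstm_step N u (x, \<xi>)))"
  unfolding lstm_step_def Let_def by simp

lemma abs_sigma_g_gate_le:
  assumes "u \<in> input_set umax" and "\<And>l. \<bar>\<xi> $ l\<bar> \<le> 1"
  shows "\<bar>vmap sigma_g (W *v u + U *v \<xi> + b) $ j\<bar> \<le> sigma_g (cat_inf_norm umax W U b)"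
  using abs_sigma_g_le[OF abs_affine_nth_le_cat_inf_norm[OF assms]] by simp

lemma abs_sigma_c_gate_le:
  assumes "u \<in> input_set umax" and "\<And>l. \<bar>\<xi> $ l\<bar> \<le> 1"
  shows "\<bar>vmap sigma_c (W *v u + U *v \<xi> + b) $ j\<bar> \<le> sigma_c (cat_inf_norm umax W U b)"
  using abs_sigma_c_le[OF abs_affine_nth_le_cat_inf_norm[OF assms]] by simp

lemma abs_lstm_step_fst_le:
  assumes "(x, \<xi>) \<in> state_set N umax" and "u \<in> input_set umax"
  shows "\<bar>fst (lstm_step N u (x, \<xi>)) $ j\<bar> \<le> xbar N umax"
proof -
  have \<xi>: "\<And>l. \<bar>\<xi> $ l\<bar> \<le> 1" and x: "\<bar>x $ j\<bar> \<le> xbar N umax"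
    using assms(1) by (auto simp: mem_state_set_iff less_imp_le)
  define f where "f = vmap sigma_g (Wf N *v u + Uf N *v \<xi> + bf N) $ j"
  define i where "i = vmap sigma_g (Wi N *v u + Ui N *v \<xi> + bi N) $ j"
  define c where "c = vmap sigma_c (Wc N *v u + Uc N *v \<xi> + bc N) $ j"
  have f: "\<bar>f\<bar> \<le> sgbar_f N umax"
    unfolding f_def sgbar_f_def by (rule abs_sigma_g_gate_le[OF assms(2) \<xi>])
  have i: "\<bar>i\<bar> \<le> sgbar_i N umax"
    unfolding i_def sgbar_i_def by (rule abs_sigma_g_gate_le[OF assms(2) \<xi>])
  have c: "\<bar>c\<bar> \<le> scbar_c N umax"
    unfolding c_def scbar_c_def by (rule abs_sigma_c_gate_le[OF assms(2) \<xi>])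
  have "\<bar>fst (lstm_step N u (x, \<xi>)) $ j\<bar> = \<bar>f * x $ j + i * c\<bar>"
    unfolding lstm_step_fst f_def i_def c_def by simp
  also have "\<dots> \<le> \<bar>f\<bar> * \<bar>x $ j\<bar> + \<bar>i\<bar> * \<bar>c\<bar>"
    by (metis abs_mult abs_triangle_ineq)
  also have "\<dots> \<le> sgbar_f N umax * xbar N umax + sgbar_i N umax * scbar_c N umax"
    by (intro add_mono mult_mono f i c x) (use sgbar_bounds[of N umax] in auto)
  also have "\<dots> = xbar N umax"
    by (rule xbar_fixpoint)
  finally show ?thesis .
qed

lemma lstm_step_in_state_set:
  assumes "s \<in> state_set N umax" and "u \<in> input_set umax"
  shows "lstm_step N u s \<in> state_set N umax"
proof -
  obtain x \<xi> where s: "s = (x, \<xi>)"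
    by fastforce
  have "\<bar>snd (lstm_step N u (x, \<xi>)) $ j\<bar> < 1" for j
    unfolding lstm_step_snd
    using mult_strict_mono[OF sigma_g_less_1 abs_sigma_c_less_1 zero_less_one abs_ge_zero] sigma_g_pos
    by (simp add: abs_mult less_imp_le)
  moreover have "\<bar>fst (lstm_step N u (x, \<xi>)) $ j\<bar> \<le> xbar N umax" for j
    using abs_lstm_step_fst_le assms unfolding s by blast
  ultimately have "(fst (lstm_step N u (x, \<xi>)), snd (lstm_step N u (x, \<xi>))) \<in> state_set N umax"
    unfolding mem_state_set_iff by blast
  then show ?thesis
    unfolding s by simp
qed

lemma lstm_traj_in_state_set:
  assumes "s0 \<in> state_set N umax" and "\<forall>h. u h \<in> input_set umax"
  shows "lstm_traj N u s0 k \<in> state_set N umax"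
  using assms by (induction k) (simp_all add: lstm_step_in_state_set)

section \<open>One-step incremental bounds\<close>

definition alpha :: "('x::finite, 'u::finite) lstm \<Rightarrow> real \<Rightarrow> real" where
  "alpha N umax = 1/4 * mnorm2 (Uf N) * xbar N umax + sgbar_i N umax * mnorm2 (Uc N)
     + 1/4 * mnorm2 (Ui N) * scbar_c N umax"

definition a22 :: "('x::finite, 'u::finite) lstm \<Rightarrow> real \<Rightarrow> real" where
  "a22 N umax = alpha N umax * sgbar_o N umax + 1/4 * scbar_x N umax * mnorm2 (Uo N)"

definition input_gain_x :: "('x::finite, 'u::finite) lstm \<Rightarrow> real \<Rightarrow> real" where
  "input_gain_x N umax = 1/4 * mnorm2 (Wf N) * xbar N umax + sgbar_i N umax * mnorm2 (Wc N)
     + 1/4 * mnorm2 (Wi N) * scbar_c N umax"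

definition input_gain_xi :: "('x::finite, 'u::finite) lstm \<Rightarrow> real \<Rightarrow> real" where
  "input_gain_xi N umax = sgbar_o N umax * input_gain_x N umax + 1/4 * scbar_x N umax * mnorm2 (Wo N)"

lemma A_delta_nth:
  "A_delta N umax $ 1 $ 1 = sgbar_f N umax"
  "A_delta N umax $ 1 $ 2 = alpha N umax"
  "A_delta N umax $ 2 $ 1 = sgbar_o N umax * sgbar_f N umax"
  "A_delta N umax $ 2 $ 2 = a22 N umax"
  unfolding A_delta_def Let_def alpha_def a22_def xbar_def by simp_all

lemma lstm_coeffs_nonneg:
  "0 \<le> alpha N umax" "0 \<le> a22 N umax" "0 \<le> input_gain_x N umax" "0 \<le> input_gain_xi N umax"
  using sgbar_bounds[of N umax] scbar_c_nonneg[of N umax] xbar_nonneg[of N umax] scbar_x_nonneg[of N umax]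
  unfolding alpha_def a22_def input_gain_x_def input_gain_xi_def
  by (auto intro!: add_nonneg_nonneg mult_nonneg_nonneg mnorm2_nonneg)

lemma norm_lstm_step_fst_diff_le:
  assumes "(x1, \<xi>1) \<in> state_set N umax" and "(x2, \<xi>2) \<in> state_set N umax"
    and u1: "u1 \<in> input_set umax" and u2: "u2 \<in> input_set umax"
  shows "norm (fst (lstm_step N u1 (x1, \<xi>1)) - fst (lstm_step N u2 (x2, \<xi>2)))
    \<le> sgbar_f N umax * norm (x1 - x2) + alpha N umax * norm (\<xi>1 - \<xi>2)
       + input_gain_x N umax * norm (u1 - u2)"
proof -
  have \<xi>1: "\<And>j. \<bar>\<xi>1 $ j\<bar> \<le> 1" and \<xi>2: "\<And>j. \<bar>\<xi>2 $ j\<bar> \<le> 1"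
    and x2: "\<And>j. \<bar>x2 $ j\<bar> \<le> xbar N umax"
    using assms(1,2) by (auto simp: mem_state_set_iff less_imp_le)
  define ex e\<xi> eu where "ex = norm (x1 - x2)" and "e\<xi> = norm (\<xi>1 - \<xi>2)" and "eu = norm (u1 - u2)"
  define f1 f2 where "f1 = vmap sigma_g (Wf N *v u1 + Uf N *v \<xi>1 + bf N)"
    and "f2 = vmap sigma_g (Wf N *v u2 + Uf N *v \<xi>2 + bf N)"
  define i1 i2 where "i1 = vmap sigma_g (Wi N *v u1 + Ui N *v \<xi>1 + bi N)"
    and "i2 = vmap sigma_g (Wi N *v u2 + Ui N *v \<xi>2 + bi N)"
  define c1 c2 where "c1 = vmap sigma_c (Wc N *v u1 + Uc N *v \<xi>1 + bc N)"
    and "c2 = vmap sigma_c (Wc N *v u2 + Uc N *v \<xi>2 + bc N)"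
  have f1: "\<And>j. \<bar>f1 $ j\<bar> \<le> sgbar_f N umax"
    unfolding f1_def sgbar_f_def by (rule abs_sigma_g_gate_le[OF u1 \<xi>1])
  have i1: "\<And>j. \<bar>i1 $ j\<bar> \<le> sgbar_i N umax"
    unfolding i1_def sgbar_i_def by (rule abs_sigma_g_gate_le[OF u1 \<xi>1])
  have c2: "\<And>j. \<bar>c2 $ j\<bar> \<le> scbar_c N umax"
    unfolding c2_def scbar_c_def by (rule abs_sigma_c_gate_le[OF u2 \<xi>2])
  have f: "norm (f1 - f2) \<le> 1/4 * (mnorm2 (Uf N) * e\<xi> + mnorm2 (Wf N) * eu)"
    unfolding f1_def f2_def e\<xi>_def eu_def by (rule norm_gate_diff_le[OF abs_sigma_g_diff_le]) simp
  have i: "norm (i1 - i2) \<le> 1/4 * (mnorm2 (Ui N) * e\<xi> + mnorm2 (Wi N) * eu)"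
    unfolding i1_def i2_def e\<xi>_def eu_def by (rule norm_gate_diff_le[OF abs_sigma_g_diff_le]) simp
  have c: "norm (c1 - c2) \<le> 1 * (mnorm2 (Uc N) * e\<xi> + mnorm2 (Wc N) * eu)"
    unfolding c1_def c2_def e\<xi>_def eu_def by (rule norm_gate_diff_le) (simp_all add: abs_sigma_c_diff_le)
  have "norm (fst (lstm_step N u1 (x1, \<xi>1)) - fst (lstm_step N u2 (x2, \<xi>2)))
      = norm ((f1 \<circ>\<^sub>H x1 - f2 \<circ>\<^sub>H x2) + (i1 \<circ>\<^sub>H c1 - i2 \<circ>\<^sub>H c2))"
    unfolding lstm_step_fst f1_def f2_def i1_def i2_def c1_def c2_def by (simp add: algebra_simps)
  also have "\<dots> \<le> norm (f1 \<circ>\<^sub>H x1 - f2 \<circ>\<^sub>H x2) + norm (i1 \<circ>\<^sub>H c1 - i2 \<circ>\<^sub>H c2)"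
    by (rule norm_triangle_ineq)
  also have "\<dots> \<le> (sgbar_f N umax * ex + xbar N umax * norm (f1 - f2))
                + (sgbar_i N umax * norm (c1 - c2) + scbar_c N umax * norm (i1 - i2))"
    unfolding ex_def by (intro add_mono norm_hadamard_diff_le f1 x2 i1 c2)
  also have "\<dots> \<le> (sgbar_f N umax * ex + xbar N umax * (1/4 * (mnorm2 (Uf N) * e\<xi> + mnorm2 (Wf N) * eu)))
                + (sgbar_i N umax * (1 * (mnorm2 (Uc N) * e\<xi> + mnorm2 (Wc N) * eu))
                   + scbar_c N umax * (1/4 * (mnorm2 (Ui N) * e\<xi> + mnorm2 (Wi N) * eu)))"
    using xbar_nonneg[of N umax] scbar_c_nonneg[of N umax] sgbar_bounds[of N umax]
    by (intro add_mono mult_left_mono f i c order_refl) auto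
  also have "\<dots> = sgbar_f N umax * ex + alpha N umax * e\<xi> + input_gain_x N umax * eu"
    unfolding alpha_def input_gain_x_def by (simp add: algebra_simps)
  finally show ?thesis
    unfolding ex_def e\<xi>_def eu_def .
qed

lemma norm_lstm_step_snd_diff_le:
  assumes s1: "(x1, \<xi>1) \<in> state_set N umax" and s2: "(x2, \<xi>2) \<in> state_set N umax"
    and u1: "u1 \<in> input_set umax" and u2: "u2 \<in> input_set umax"
  shows "norm (snd (lstm_step N u1 (x1, \<xi>1)) - snd (lstm_step N u2 (x2, \<xi>2)))
    \<le> sgbar_o N umax * sgbar_f N umax * norm (x1 - x2) + a22 N umax * norm (\<xi>1 - \<xi>2)
       + input_gain_xi N umax * norm (u1 - u2)"
proof -
  have \<xi>1: "\<And>j. \<bar>\<xi>1 $ j\<bar> \<le> 1"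
    using s1 by (auto simp: mem_state_set_iff less_imp_le)
  define ex e\<xi> eu where "ex = norm (x1 - x2)" and "e\<xi> = norm (\<xi>1 - \<xi>2)" and "eu = norm (u1 - u2)"
  define o1 o2 where "o1 = vmap sigma_g (Wo N *v u1 + Uo N *v \<xi>1 + bo N)"
    and "o2 = vmap sigma_g (Wo N *v u2 + Uo N *v \<xi>2 + bo N)"
  define x1' x2' where "x1' = fst (lstm_step N u1 (x1, \<xi>1))" and "x2' = fst (lstm_step N u2 (x2, \<xi>2))"
  have o1: "\<And>j. \<bar>o1 $ j\<bar> \<le> sgbar_o N umax"
    unfolding o1_def sgbar_o_def by (rule abs_sigma_g_gate_le[OF u1 \<xi>1])
  have x2'_le: "\<bar>vmap sigma_c x2' $ j\<bar> \<le> scbar_x N umax" for j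
    unfolding scbar_x_eq_sigma_c_xbar x2'_def vmap_nth
    by (rule abs_sigma_c_le[OF abs_lstm_step_fst_le[OF s2 u2]])
  have o: "norm (o1 - o2) \<le> 1/4 * (mnorm2 (Uo N) * e\<xi> + mnorm2 (Wo N) * eu)"
    unfolding o1_def o2_def e\<xi>_def eu_def by (rule norm_gate_diff_le[OF abs_sigma_g_diff_le]) simp
  have "norm (vmap sigma_c x1' - vmap sigma_c x2') \<le> 1 * norm (x1' - x2')"
    by (rule norm_vmap_diff_le) (simp_all add: abs_sigma_c_diff_le)
  also have "\<dots> \<le> sgbar_f N umax * ex + alpha N umax * e\<xi> + input_gain_x N umax * eu"
    unfolding x1'_def x2'_def ex_def e\<xi>_def eu_def using norm_lstm_step_fst_diff_le[OF assms] by simp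
  finally have c: "norm (vmap sigma_c x1' - vmap sigma_c x2')
      \<le> sgbar_f N umax * ex + alpha N umax * e\<xi> + input_gain_x N umax * eu" .
  have "norm (snd (lstm_step N u1 (x1, \<xi>1)) - snd (lstm_step N u2 (x2, \<xi>2)))
      = norm (o1 \<circ>\<^sub>H vmap sigma_c x1' - o2 \<circ>\<^sub>H vmap sigma_c x2')"
    unfolding lstm_step_snd o1_def o2_def x1'_def x2'_def ..
  also have "\<dots> \<le> sgbar_o N umax * norm (vmap sigma_c x1' - vmap sigma_c x2')
                + scbar_x N umax * norm (o1 - o2)"
    by (intro norm_hadamard_diff_le o1 x2'_le)
  also have "\<dots> \<le> sgbar_o N umax * (sgbar_f N umax * ex + alpha N umax * e\<xi> + input_gain_x N umax * eu)
                + scbar_x N umax * (1/4 * (mnorm2 (Uo N) * e\<xi> + mnorm2 (Wo N) * eu))"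
    using sgbar_bounds[of N umax] scbar_x_nonneg[of N umax]
    by (intro add_mono mult_left_mono c o) auto
  also have "\<dots> = sgbar_o N umax * sgbar_f N umax * ex + a22 N umax * e\<xi> + input_gain_xi N umax * eu"
    unfolding a22_def input_gain_xi_def by (simp add: algebra_simps)
  finally show ?thesis
    unfolding ex_def e\<xi>_def eu_def .
qed

section \<open>Spectral radius of nonnegative 2x2 matrices\<close>

lemma eigenvalue_2x2_charpoly:
  fixes A :: "real^2^2" and z :: complex and v :: "complex^2"
  assumes "v \<noteq> 0" and "(\<chi> i j. complex_of_real (A $ i $ j)) *v v = (\<chi> i. z * v $ i)"
  shows "(of_real (A$1$1) - z) * (of_real (A$2$2) - z) - of_real (A$1$2) * of_real (A$2$1) = 0"
proof -
  let ?a = "complex_of_real (A$1$1)" and ?b = "complex_of_real (A$1$2)"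
  let ?c = "complex_of_real (A$2$1)" and ?d = "complex_of_real (A$2$2)"
  have e1: "?a * v$1 + ?b * v$2 = z * v$1" and e2: "?c * v$1 + ?d * v$2 = z * v$2"
    using assms(2) unfolding vec_eq_iff by (auto simp: matrix_vector_mult_def sum_2 forall_2)
  have "((?a - z) * (?d - z) - ?b * ?c) * v$1
      = (?d - z) * (?a * v$1 + ?b * v$2 - z * v$1) - ?b * (?c * v$1 + ?d * v$2 - z * v$2)"
    "((?a - z) * (?d - z) - ?b * ?c) * v$2
      = (?a - z) * (?c * v$1 + ?d * v$2 - z * v$2) - ?c * (?a * v$1 + ?b * v$2 - z * v$1)"
    by (simp_all add: algebra_simps)
  moreover have "v$1 \<noteq> 0 \<or> v$2 \<noteq> 0"
    using assms(1) unfolding vec_eq_iff forall_2 by auto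
  ultimately show ?thesis
    using e1 e2 by auto
qed

lemma finite_eigenvalue_norms_2x2:
  fixes A :: "real^2^2"
  shows "finite {cmod z | z. \<exists>v::complex^2. v \<noteq> 0 \<and>
           (\<chi> i j. complex_of_real (A $ i $ j)) *v v = (\<chi> i. z * v $ i)}"
proof -
  let ?a = "complex_of_real (A$1$1)" and ?b = "complex_of_real (A$1$2)"
  let ?c = "complex_of_real (A$2$1)" and ?d = "complex_of_real (A$2$2)"
  let ?E = "{z. \<exists>v::complex^2. v \<noteq> 0 \<and> (\<chi> i j. complex_of_real (A $ i $ j)) *v v = (\<chi> i. z * v $ i)}"
  define p where "p = [: ?a * ?d - ?b * ?c, - (?a + ?d), 1 :]"
  have "?E \<subseteq> {z. poly p z = 0}"
    using eigenvalue_2x2_charpoly unfolding p_def by (fastforce simp: algebra_simps)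
  moreover have "p \<noteq> 0"
    unfolding p_def by simp
  ultimately have "finite ?E"
    using poly_roots_finite finite_subset by blast
  moreover have "{cmod z | z. z \<in> ?E} = cmod ` ?E"
    by auto
  ultimately show ?thesis
    by simp
qed

lemma real_eigenvalue_le_spectral_radius_2x2:
  fixes A :: "real^2^2"
  assumes "A$1$1 * v1 + A$1$2 * v2 = r * v1" and "A$2$1 * v1 + A$2$2 * v2 = r * v2"
    and "v1 \<noteq> 0 \<or> v2 \<noteq> 0"
  shows "r \<le> spectral_radius A"
proof -
  define v :: "complex^2" where "v = (\<chi> i. if i = 1 then complex_of_real v1 else complex_of_real v2)"
  have v: "v$1 = v1" "v$2 = v2"
    unfolding v_def by auto
  have "v \<noteq> 0"
    using assms(3) v by auto
  moreover have "(\<chi> i j. complex_of_real (A $ i $ j)) *v v = (\<chi> i. complex_of_real r * v $ i)"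
    using arg_cong[OF assms(1), of complex_of_real] arg_cong[OF assms(2), of complex_of_real]
    unfolding vec_eq_iff by (auto simp: matrix_vector_mult_def sum_2 forall_2 v)
  ultimately have "cmod (complex_of_real r) \<in> {cmod z | z. \<exists>v::complex^2. v \<noteq> 0 \<and>
       (\<chi> i j. complex_of_real (A $ i $ j)) *v v = (\<chi> i. z * v $ i)}"
    by blast
  then have "\<bar>r\<bar> \<le> spectral_radius A"
    unfolding spectral_radius_def using Max_ge[OF finite_eigenvalue_norms_2x2] by simp
  then show ?thesis
    by simp
qed

lemma perron_root_le_spectral_radius_2x2:
  fixes A :: "real^2^2"
  defines "a \<equiv> A$1$1" and "b \<equiv> A$1$2" and "c \<equiv> A$2$1" and "d \<equiv> A$2$2"
  assumes "0 \<le> b * c"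
  shows "(a + d + sqrt ((a - d)\<^sup>2 + 4 * (b * c))) / 2 \<le> spectral_radius A"
proof -
  define r where "r = (a + d + sqrt ((a - d)\<^sup>2 + 4 * (b * c))) / 2"
  have "\<bar>a - d\<bar> \<le> sqrt ((a - d)\<^sup>2 + 4 * (b * c))"
    using assms(5) by (intro real_le_rsqrt) simp
  then have r_ge: "a \<le> r" "d \<le> r"
    unfolding r_def by auto
  have "(r - a) * (r - d) = ((sqrt ((a - d)\<^sup>2 + 4 * (b * c)))\<^sup>2 - (a - d)\<^sup>2) / 4"
    unfolding r_def by (simp add: field_simps power2_eq_square)
  then have charpoly: "(r - a) * (r - d) = b * c"
    using assms(5) by simp
  \<comment> \<open>The eigenvector for \<open>r\<close> has to be chosen differently when \<open>b = 0\<close>.\<close>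
  consider "b \<noteq> 0" | "b = 0" "r = d" | "b = 0" "r \<noteq> d" "r = a"
    using charpoly by (cases "b = 0") auto
  then show ?thesis
  proof cases
    case 1
    then show ?thesis
      using charpoly unfolding r_def[symmetric]
      by (intro real_eigenvalue_le_spectral_radius_2x2[of A b "r - a"])
         (auto simp: a_def b_def c_def d_def algebra_simps)
  next
    case 2
    then show ?thesis
      unfolding r_def[symmetric]
      by (intro real_eigenvalue_le_spectral_radius_2x2[of A 0 1]) (auto simp: b_def d_def)
  next
    case 3
    then show ?thesis
      unfolding r_def[symmetric]
      by (intro real_eigenvalue_le_spectral_radius_2x2[of A "a - d" c])
         (auto simp: a_def b_def c_def d_def algebra_simps)
  qed
qed

lemma spectral_radius_2x2_less_1D:
  fixes A :: "real^2^2"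
  defines "a \<equiv> A$1$1" and "b \<equiv> A$1$2" and "c \<equiv> A$2$1" and "d \<equiv> A$2$2"
  assumes "spectral_radius A < 1" and "0 \<le> b * c"
  shows "a < 1" and "d < 1" and "b * c < (1 - a) * (1 - d)"
proof -
  define s where "s = sqrt ((a - d)\<^sup>2 + 4 * (b * c))"
  have "(a + d + s) / 2 < 1"
    using perron_root_le_spectral_radius_2x2[of A] assms unfolding s_def by simp
  moreover have "\<bar>a - d\<bar> \<le> s"
    unfolding s_def using assms(6) by (intro real_le_rsqrt) simp
  ultimately show "a < 1" "d < 1"
    by auto
  have "s\<^sup>2 < (2 - a - d)\<^sup>2"
    using \<open>(a + d + s) / 2 < 1\<close> assms(6) by (intro power_strict_mono) (auto simp: s_def)
  then show "b * c < (1 - a) * (1 - d)"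
    unfolding s_def using assms(6) by (simp add: power2_eq_square algebra_simps)
qed

lemma exists_contracting_weights_2x2:
  fixes a b c d :: real
  assumes "0 \<le> a" "0 \<le> b" "0 \<le> c" "0 \<le> d" "a < 1" "d < 1" "b * c < (1 - a) * (1 - d)"
  obtains p1 p2 lam where "0 < p1" "0 < p2" "0 < lam" "lam < 1"
    "p1 * a + p2 * c \<le> lam * p1" "p1 * b + p2 * d \<le> lam * p2"
proof -
  \<comment> \<open>For \<open>(p1, p2) = (1 - d, b)\<close> the margins \<open>m1\<close>, \<open>m2\<close> below are \<open>g > 0\<close> and \<open>0\<close>;
    raising \<open>p2\<close> by a small \<open>\<delta>\<close> makes both positive.\<close>
  define g where "g = (1 - a) * (1 - d) - b * c"
  define \<delta> where "\<delta> = g / (2 * (c + 1))"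
  have "0 < g"
    using assms unfolding g_def by simp
  then have "0 < \<delta>"
    unfolding \<delta>_def using assms(3) by simp
  have "\<delta> * c = g * (c / (2 * (c + 1)))"
    unfolding \<delta>_def by simp
  also have "\<dots> < g"
    using \<open>0 < g\<close> assms(3) mult_strict_left_mono[of "c / (2 * (c + 1))" 1 g] by simp
  finally have "\<delta> * c < g" .
  define p1 p2 where "p1 = 1 - d" and "p2 = b + \<delta>"
  define m1 m2 where "m1 = p1 * (1 - a) - p2 * c" and "m2 = p2 * (1 - d) - p1 * b"
  have p: "0 < p1" "0 < p2"
    unfolding p1_def p2_def using assms \<open>0 < \<delta>\<close> by auto
  have m: "0 < m1" "0 < m2"
    unfolding m1_def m2_def p1_def p2_def using \<open>\<delta> * c < g\<close> \<open>0 < \<delta>\<close> assms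
    by (simp_all add: g_def algebra_simps)
  define lam where "lam = max (1/2) (max (1 - m1 / p1) (1 - m2 / p2))"
  have "0 < lam" "lam < 1"
    unfolding lam_def using m p by auto
  moreover have "p1 * a + p2 * c \<le> lam * p1"
  proof -
    have "p1 * a + p2 * c = (1 - m1 / p1) * p1"
      unfolding m1_def using p by (simp add: field_simps)
    also have "\<dots> \<le> lam * p1"
      unfolding lam_def using p by (intro mult_right_mono) auto
    finally show ?thesis .
  qed
  moreover have "p1 * b + p2 * d \<le> lam * p2"
  proof -
    have "p1 * b + p2 * d = (1 - m2 / p2) * p2"
      unfolding m2_def using p by (simp add: field_simps)
    also have "\<dots> \<le> lam * p2"
      unfolding lam_def using p by (intro mult_right_mono) auto
    finally show ?thesis .
  qed
  ultimately show ?thesis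
    using that p by blast
qed

lemma spectral_radius_less_1_imp_contracting_weights:
  fixes A :: "real^2^2"
  assumes "spectral_radius A < 1" and "\<And>i j. 0 \<le> A $ i $ j"
  obtains p1 p2 lam where "0 < p1" "0 < p2" "0 < lam" "lam < 1"
    "p1 * A$1$1 + p2 * A$2$1 \<le> lam * p1" "p1 * A$1$2 + p2 * A$2$2 \<le> lam * p2"
proof -
  have "0 \<le> A$1$2 * A$2$1"
    using assms(2) by simp
  then show ?thesis
    using exists_contracting_weights_2x2[OF assms(2) assms(2) assms(2) assms(2)
        spectral_radius_2x2_less_1D[OF assms(1)]] that
    by blast
qed

section \<open>Weighted contraction of trajectories\<close>

lemma linear_recurrence_le:
  fixes e :: "nat \<Rightarrow> real"
  assumes step: "\<And>k. e (Suc k) \<le> lam * e k + c" and "0 \<le> lam" "lam < 1" "0 \<le> c"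
  shows "e k \<le> lam ^ k * e 0 + c / (1 - lam)"
proof (induction k)
  case 0
  then show ?case
    using assms by simp
next
  case (Suc k)
  have "e (Suc k) \<le> lam * (lam ^ k * e 0 + c / (1 - lam)) + c"
    using step[of k] mult_left_mono[OF Suc.IH \<open>0 \<le> lam\<close>] by linarith
  also have "\<dots> = lam ^ Suc k * e 0 + c / (1 - lam)"
    using \<open>lam < 1\<close> by (simp add: field_simps)
  finally show ?case .
qed

definition weighted_norm :: "real \<Rightarrow> real \<Rightarrow> 'a::real_normed_vector \<times> 'b::real_normed_vector \<Rightarrow> real" where
  "weighted_norm p1 p2 z = p1 * norm (fst z) + p2 * norm (snd z)"

lemma weighted_norm_le:
  assumes "0 \<le> p1" and "0 \<le> p2"
  shows "weighted_norm p1 p2 z \<le> (p1 + p2) * norm z"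
  unfolding weighted_norm_def distrib_right
  using assms norm_fst_le[of "fst z" "snd z"] norm_snd_le[of "snd z" "fst z"]
  by (intro add_mono mult_left_mono) auto

lemma norm_le_weighted_norm:
  assumes "0 \<le> p1" and "0 \<le> p2"
  shows "min p1 p2 * norm z \<le> weighted_norm p1 p2 z"
proof -
  have "min p1 p2 * norm z \<le> min p1 p2 * (norm (fst z) + norm (snd z))"
    using assms norm_Pair_le[of "fst z" "snd z"] by (intro mult_left_mono) auto
  also have "\<dots> \<le> weighted_norm p1 p2 z"
    unfolding weighted_norm_def distrib_left by (intro add_mono mult_right_mono) auto
  finally show ?thesis .
qed

lemma lstm_step_weighted_contraction:
  assumes "s1 \<in> state_set N umax" and "s2 \<in> state_set N umax"
    and "u1 \<in> input_set umax" and "u2 \<in> input_set umax"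
    and "0 \<le> p1" and "0 \<le> p2"
    and col1: "p1 * sgbar_f N umax + p2 * (sgbar_o N umax * sgbar_f N umax) \<le> lam * p1"
    and col2: "p1 * alpha N umax + p2 * a22 N umax \<le> lam * p2"
  shows "weighted_norm p1 p2 (lstm_step N u1 s1 - lstm_step N u2 s2)
    \<le> lam * weighted_norm p1 p2 (s1 - s2)
       + (p1 * input_gain_x N umax + p2 * input_gain_xi N umax) * norm (u1 - u2)"
proof -
  obtain x1 \<xi>1 x2 \<xi>2 where s: "s1 = (x1, \<xi>1)" "s2 = (x2, \<xi>2)"
    by fastforce
  define ex e\<xi> eu where "ex = norm (x1 - x2)" and "e\<xi> = norm (\<xi>1 - \<xi>2)" and "eu = norm (u1 - u2)"
  note fst_le = norm_lstm_step_fst_diff_le[OF assms(1-4)[unfolded s], folded ex_def e\<xi>_def eu_def]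
  note snd_le = norm_lstm_step_snd_diff_le[OF assms(1-4)[unfolded s], folded ex_def e\<xi>_def eu_def]
  have "weighted_norm p1 p2 (lstm_step N u1 s1 - lstm_step N u2 s2)
      \<le> p1 * (sgbar_f N umax * ex + alpha N umax * e\<xi> + input_gain_x N umax * eu)
        + p2 * (sgbar_o N umax * sgbar_f N umax * ex + a22 N umax * e\<xi> + input_gain_xi N umax * eu)"
    unfolding weighted_norm_def s fst_diff snd_diff
    by (intro add_mono mult_left_mono fst_le snd_le assms(5,6))
  also have "\<dots> = (p1 * sgbar_f N umax + p2 * (sgbar_o N umax * sgbar_f N umax)) * ex
      + (p1 * alpha N umax + p2 * a22 N umax) * e\<xi>
      + (p1 * input_gain_x N umax + p2 * input_gain_xi N umax) * eu"
    by (simp add: algebra_simps)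
  also have "\<dots> \<le> lam * p1 * ex + lam * p2 * e\<xi>
      + (p1 * input_gain_x N umax + p2 * input_gain_xi N umax) * eu"
    using col1 col2 by (intro add_mono[OF add_mono order_refl] mult_right_mono) (auto simp: ex_def e\<xi>_def)
  also have "\<dots> = lam * weighted_norm p1 p2 (s1 - s2)
      + (p1 * input_gain_x N umax + p2 * input_gain_xi N umax) * norm (u1 - u2)"
    unfolding weighted_norm_def s ex_def e\<xi>_def eu_def by (simp add: algebra_simps)
  finally show ?thesis .
qed

lemma lstm_traj_weighted_bound:
  assumes "s1 \<in> state_set N umax" and "s2 \<in> state_set N umax"
    and "\<forall>h. u1 h \<in> input_set umax" and "\<forall>h. u2 h \<in> input_set umax"
    and "\<forall>h. norm (u1 h - u2 h) \<le> D"
    and "0 \<le> p1" and "0 \<le> p2" and "0 \<le> lam" and "lam < 1"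
    and "p1 * sgbar_f N umax + p2 * (sgbar_o N umax * sgbar_f N umax) \<le> lam * p1"
    and "p1 * alpha N umax + p2 * a22 N umax \<le> lam * p2"
  shows "weighted_norm p1 p2 (lstm_traj N u1 s1 k - lstm_traj N u2 s2 k)
    \<le> lam ^ k * weighted_norm p1 p2 (s1 - s2)
       + (p1 * input_gain_x N umax + p2 * input_gain_xi N umax) * D / (1 - lam)"
proof -
  define K where "K = p1 * input_gain_x N umax + p2 * input_gain_xi N umax"
  define e where "e j = weighted_norm p1 p2 (lstm_traj N u1 s1 j - lstm_traj N u2 s2 j)" for j
  have "0 \<le> K"
    unfolding K_def by (intro add_nonneg_nonneg mult_nonneg_nonneg assms(6,7) lstm_coeffs_nonneg)
  moreover have "0 \<le> D"
    using norm_ge_zero[of "u1 0 - u2 0"] assms(5) by (meson order_trans)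
  ultimately have "0 \<le> K * D"
    by simp
  moreover have "e (Suc j) \<le> lam * e j + K * D" for j
  proof -
    have "e (Suc j) \<le> lam * e j + K * norm (u1 j - u2 j)"
      unfolding e_def K_def lstm_traj.simps
      using assms(3,4) by (intro lstm_step_weighted_contraction lstm_traj_in_state_set assms(1,2,6,7,10,11)) simp_all
    moreover have "K * norm (u1 j - u2 j) \<le> K * D"
      using \<open>0 \<le> K\<close> assms(5) by (simp add: mult_left_mono)
    ultimately show ?thesis
      by linarith
  qed
  ultimately have "e k \<le> lam ^ k * e 0 + K * D / (1 - lam)"
    using linear_recurrence_le[of e lam "K * D"] assms(8,9) by blast
  then show ?thesis
    unfolding e_def K_def by simp
qed

lemma class_KL_geometric:
  assumes "0 < C" and "0 < lam" and "lam < 1"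
  shows "class_KL (\<lambda>s k. C * lam ^ k * s)"
  unfolding class_KL_def class_K_def
proof (intro conjI allI impI)
  fix k :: nat
  show "continuous_on {0..} (\<lambda>s. C * lam ^ k * s)"
    by (intro continuous_intros)
  show "strict_mono_on {0..} (\<lambda>s. C * lam ^ k * s)"
    unfolding strict_mono_on_def using assms by simp
  show "C * lam ^ k * 0 = 0"
    by simp
next
  fix s :: real
  assume "0 \<le> s"
  then show "antimono (\<lambda>k. C * lam ^ k * s)"
    unfolding antimono_def using assms
    by (auto intro!: mult_right_mono mult_left_mono power_decreasing)
  have "(\<lambda>k. C * lam ^ k * s) \<longlonglongrightarrow> C * 0 * s"
    using assms by (intro tendsto_intros LIMSEQ_power_zero) auto
  then show "(\<lambda>k. C * lam ^ k * s) \<longlonglongrightarrow> 0"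
    by simp
qed

lemma class_Kinf_linear:
  assumes "0 < G"
  shows "class_Kinf (\<lambda>r. G * r)"
  unfolding class_Kinf_def class_K_def
proof (intro conjI)
  show "continuous_on {0..} (\<lambda>r. G * r)"
    by (intro continuous_intros)
  show "strict_mono_on {0..} (\<lambda>r. G * r)"
    unfolding strict_mono_on_def using assms by simp
  show "filterlim (\<lambda>r. G * r) at_top at_top"
    using filterlim_tendsto_pos_mult_at_top[OF tendsto_const assms filterlim_ident] .
qed simp

lemma norm_le_of_mem_input_set:
  assumes "u \<in> input_set umax"
  shows "norm (u :: real^'u) \<le> real CARD('u) * umax"
proof -
  have "norm u \<le> (\<Sum>i\<in>UNIV. \<bar>u $ i\<bar>)"
    by (rule norm_le_l1_cart)
  also have "\<dots> \<le> (\<Sum>i\<in>(UNIV::'u set). umax)"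
    using assms by (intro sum_mono abs_nth_le_of_mem_input_set)
  finally show ?thesis
    by simp
qed

lemma norm_input_diff_le_SUP:
  fixes u1 u2 :: "'a \<Rightarrow> real^'u"
  assumes "\<forall>h. u1 h \<in> input_set umax" and "\<forall>h. u2 h \<in> input_set umax"
  shows "norm (u1 h - u2 h) \<le> (SUP h. norm (u1 h - u2 h))"
proof (rule cSUP_upper)
  have "norm (u1 h - u2 h) \<le> 2 * (real CARD('u) * umax)" for h
    using norm_triangle_ineq4[of "u1 h" "u2 h"] assms
      norm_le_of_mem_input_set[of "u1 h" umax] norm_le_of_mem_input_set[of "u2 h" umax]
    by simp
  then show "bdd_above (range (\<lambda>h. norm (u1 h - u2 h)))"
    by (rule bdd_aboveI2)
qed simp

lemma norm_lstm_traj_diff_le: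
  assumes "s1 \<in> state_set N umax" and "s2 \<in> state_set N umax"
    and "\<forall>h. u1 h \<in> input_set umax" and "\<forall>h. u2 h \<in> input_set umax"
    and "\<forall>h. norm (u1 h - u2 h) \<le> D"
    and "0 \<le> p1" and "0 \<le> p2" and "0 \<le> lam" and "lam < 1"
    and "p1 * sgbar_f N umax + p2 * (sgbar_o N umax * sgbar_f N umax) \<le> lam * p1"
    and "p1 * alpha N umax + p2 * a22 N umax \<le> lam * p2"
  shows "min p1 p2 * norm (lstm_traj N u1 s1 k - lstm_traj N u2 s2 k)
    \<le> lam ^ k * ((p1 + p2) * norm (s1 - s2))
       + (p1 * input_gain_x N umax + p2 * input_gain_xi N umax) * D / (1 - lam)"
proof -
  have "min p1 p2 * norm (lstm_traj N u1 s1 k - lstm_traj N u2 s2 k)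
      \<le> weighted_norm p1 p2 (lstm_traj N u1 s1 k - lstm_traj N u2 s2 k)"
    using assms(6,7) by (rule norm_le_weighted_norm)
  also have "\<dots> \<le> lam ^ k * weighted_norm p1 p2 (s1 - s2)
      + (p1 * input_gain_x N umax + p2 * input_gain_xi N umax) * D / (1 - lam)"
    using assms by (rule lstm_traj_weighted_bound)
  also have "\<dots> \<le> lam ^ k * ((p1 + p2) * norm (s1 - s2))
      + (p1 * input_gain_x N umax + p2 * input_gain_xi N umax) * D / (1 - lam)"
    using assms(6-8) by (intro add_mono mult_left_mono weighted_norm_le) auto
  finally show ?thesis .
qed

lemma lstm_incremental_bound:
  fixes N :: "('x::finite, 'u::finite) lstm"
  assumes "0 < p1" and "0 < p2" and "0 \<le> lam" and "lam < 1"
    and "p1 * sgbar_f N umax + p2 * (sgbar_o N umax * sgbar_f N umax) \<le> lam * p1"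
    and "p1 * alpha N umax + p2 * a22 N umax \<le> lam * p2"
  obtains C G where "0 < C" and "0 < G"
    and "\<And>k s1 s2 u1 u2. s1 \<in> state_set N umax \<Longrightarrow> s2 \<in> state_set N umax \<Longrightarrow>
       (\<forall>h. u1 h \<in> input_set umax) \<Longrightarrow> (\<forall>h. u2 h \<in> input_set umax) \<Longrightarrow>
       norm (lstm_traj N u1 s1 k - lstm_traj N u2 s2 k)
         \<le> C * lam ^ k * norm (s1 - s2) + G * (SUP h. norm (u1 h - u2 h))"
proof
  define m where "m = min p1 p2"
  define K where "K = p1 * input_gain_x N umax + p2 * input_gain_xi N umax"
  have "0 < m"
    unfolding m_def using assms by simp
  have "0 \<le> K"
    unfolding K_def using assms(1,2) by (intro add_nonneg_nonneg mult_nonneg_nonneg lstm_coeffs_nonneg) auto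
  show "0 < (p1 + p2) / m"
    using assms \<open>0 < m\<close> by simp
  \<comment> \<open>The \<open>+ 1\<close> keeps \<open>\<gamma>\<close> strictly increasing even when both input gains vanish.\<close>
  show "0 < K / ((1 - lam) * m) + 1"
    using \<open>0 \<le> K\<close> \<open>0 < m\<close> assms(4) by (simp add: add_nonneg_pos)
  fix k s1 s2 and u1 u2 :: "nat \<Rightarrow> real^'u"
  assume s: "s1 \<in> state_set N umax" "s2 \<in> state_set N umax"
    and u: "\<forall>h. u1 h \<in> input_set umax" "\<forall>h. u2 h \<in> input_set umax"
  define D where "D = (SUP h. norm (u1 h - u2 h))"
  have D: "\<forall>h. norm (u1 h - u2 h) \<le> D"
    unfolding D_def using norm_input_diff_le_SUP[OF u] by blast
  then have "0 \<le> D"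
    using norm_ge_zero[of "u1 0 - u2 0"] by (meson order_trans)
  have "m * norm (lstm_traj N u1 s1 k - lstm_traj N u2 s2 k)
      \<le> lam ^ k * ((p1 + p2) * norm (s1 - s2)) + K * D / (1 - lam)"
    unfolding m_def K_def using assms by (intro norm_lstm_traj_diff_le s u D) auto
  then have "norm (lstm_traj N u1 s1 k - lstm_traj N u2 s2 k)
      \<le> (lam ^ k * ((p1 + p2) * norm (s1 - s2)) + K * D / (1 - lam)) / m"
    using \<open>0 < m\<close> by (subst pos_le_divide_eq) (simp_all add: mult.commute)
  also have "\<dots> = (p1 + p2) / m * lam ^ k * norm (s1 - s2) + K / ((1 - lam) * m) * D"
    using \<open>0 < m\<close> assms(4) by (simp add: field_simps)
  also have "\<dots> \<le> (p1 + p2) / m * lam ^ k * norm (s1 - s2) + (K / ((1 - lam) * m) + 1) * D"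
    using \<open>0 \<le> D\<close> by (simp add: distrib_right)
  finally show "norm (lstm_traj N u1 s1 k - lstm_traj N u2 s2 k)
      \<le> (p1 + p2) / m * lam ^ k * norm (s1 - s2) + (K / ((1 - lam) * m) + 1) * (SUP h. norm (u1 h - u2 h))"
    unfolding D_def .
qed

theorem theorem2:
  fixes N :: "('x::finite, 'u::finite) lstm" and umax :: real
  assumes "spectral_radius (A_delta N umax) < 1"
  shows "\<exists>\<beta> \<gamma>. class_KL \<beta> \<and> class_Kinf \<gamma> \<and>
    (\<forall>k \<chi>01 \<chi>02 u1 u2.
       \<chi>01 \<in> state_set N umax \<longrightarrow> \<chi>02 \<in> state_set N umax \<longrightarrow>
       (\<forall>h. u1 h \<in> input_set umax) \<longrightarrow> (\<forall>h. u2 h \<in> input_set umax) \<longrightarrow>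
       norm (lstm_traj N u1 \<chi>01 k - lstm_traj N u2 \<chi>02 k)
         \<le> \<beta> (norm (\<chi>01 - \<chi>02)) k + \<gamma> (SUP h. norm (u1 h - u2 h)))"
proof -
  have "0 \<le> A_delta N umax $ i $ j" for i j
    using sgbar_bounds[of N umax] lstm_coeffs_nonneg[of N umax] exhaust_2[of i] exhaust_2[of j]
    by (auto simp: A_delta_nth)
  then obtain p1 p2 lam where "0 < p1" "0 < p2" "0 < lam" "lam < 1"
    and col1: "p1 * sgbar_f N umax + p2 * (sgbar_o N umax * sgbar_f N umax) \<le> lam * p1"
    and col2: "p1 * alpha N umax + p2 * a22 N umax \<le> lam * p2"
    using spectral_radius_less_1_imp_contracting_weights[OF assms] unfolding A_delta_nth by blast
  obtain C G where "0 < C" "0 < G"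
    and bound: "\<And>k s1 s2 u1 u2. s1 \<in> state_set N umax \<Longrightarrow> s2 \<in> state_set N umax \<Longrightarrow>
       (\<forall>h. u1 h \<in> input_set umax) \<Longrightarrow> (\<forall>h. u2 h \<in> input_set umax) \<Longrightarrow>
       norm (lstm_traj N u1 s1 k - lstm_traj N u2 s2 k)
         \<le> C * lam ^ k * norm (s1 - s2) + G * (SUP h. norm (u1 h - u2 h))"
    using lstm_incremental_bound[OF \<open>0 < p1\<close> \<open>0 < p2\<close> less_imp_le[OF \<open>0 < lam\<close>] \<open>lam < 1\<close> col1 col2]
    by blast
  show ?thesis
  proof (intro exI conjI)
    show "class_KL (\<lambda>s k. C * lam ^ k * s)"
      by (rule class_KL_geometric) fact+
    show "class_Kinf (\<lambda>r. G * r)"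
      by (rule class_Kinf_linear) fact
  qed (use bound in blast)
qed

end
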